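(* For all positive integers $n$ and $\ell$, \begin{multline*} r(n,\ell+1)=\frac{-3n^2+3\ell^2-2n\ell-n+5\ell+2}{2(n+\ell+1)^2}+\frac{\ell^2+2n\ell+2n+3\ell}{n+\ell+1}2^{-n}+\frac{n^2+n+2}{2(n+\ell+1)}2^{-\ell}\\ +\frac{1}{4(n+\ell+1)}\sum_{k=1}^{\ell}\Big(4-\frac{2}{n+\ell+1}-2^{k-\ell}\Big)r(n,k) -\frac{n+\ell+2}{2(n+\ell+1)}\sum_{k=1}^{n}\Big(\frac{1}{n+\ell+1}-2^{k-n}\Big)r(k,\ell)\\ -\frac{1}{4(n+\ell+1)}\sum_{k=1}^{n}\sum_{j=1}^{\ell}\big(2^{1+k-n}-2^{j-\ell}\big)r(k,j). \end{multline*}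
   Context: For a directed graph with nonnegative adjacency matrix $A=[a_{i,j}]$ ($a_{i,j}>0$ iff there is an edge from $i$ to $j$), let $D$ be the diagonal matrix of out-degrees $d_k=\sum_j a_{k,j}$ and $L=D-A$. For a connected graph (one with a node reachable from every node) on $N$ nodes, let $\Pi=I_N-\frac1N\mathbf{1}_N\mathbf{1}_N^T$, $Q\in\mathbb{R}^{(N-1)\times N}$ with $Q\mathbf{1}_N=0$, $QQ^T=I_{N-1}$, $Q^TQ=\Pi$; $\overline L=QLQ^T$; $\Sigma$ the unique solution of $\overline L\Sigma+\Sigma\overline L^T=I_{N-1}$; $X=2Q^T\Sigma Q$; and the effective resistance $r_{k,j}=x_{k,k}+x_{j,j}-2x_{k,j}$. For integers $n,m\ge1$, $\mathcal{G}^{\mathrm{tree}}_{n,m}$ denotes the unit-weight directed tree with $n+m+1$ nodes formed by a directed path of $n$ edges from one leaf to a root and a directed path of $m$ edges from another leaf to the same root, and $r(n,m)$ denotes the effective resistance between its two leaves. *)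

theory Defs
  imports "Jordan_Normal_Form.Matrix" Complex_Main
begin

definition laplacian :: "real mat \<Rightarrow> real mat" where
  "laplacian A = mat (dim_row A) (dim_row A)
     (\<lambda>(i,j). (if i = j then (\<Sum>k<dim_row A. A $$ (i,k)) else 0) - A $$ (i,j))"

text \<open>Q is any (N-1) x N matrix with Q 1 = 0, Q Q^T = I, Q^T Q = Pi; the resistance does not
depend on the choice, we pick one via SOME. Sigma is the unique solution of the Lyapunov equation.\<close>
definition proj_Q :: "nat \<Rightarrow> real mat" where
  "proj_Q N = (SOME Q. Q \<in> carrier_mat (N - 1) N \<and> Q *\<^sub>v (vec N (\<lambda>_. 1)) = 0\<^sub>v (N - 1)
      \<and> Q * Q\<^sup>T = 1\<^sub>m (N - 1)
      \<and> Q\<^sup>T * Q = 1\<^sub>m N - (1 / real N) \<cdot>\<^sub>m mat N N (\<lambda>_. 1))"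

definition lyap_Sigma :: "real mat \<Rightarrow> real mat" where
  "lyap_Sigma Lb = (THE S. S \<in> carrier_mat (dim_row Lb) (dim_row Lb)
      \<and> Lb * S + S * Lb\<^sup>T = 1\<^sub>m (dim_row Lb))"

definition resistance_X :: "real mat \<Rightarrow> real mat" where
  "resistance_X A = (let N = dim_row A; Q = proj_Q N; Lb = Q * laplacian A * Q\<^sup>T
      in 2 \<cdot>\<^sub>m (Q\<^sup>T * lyap_Sigma Lb * Q))"

definition eff_res :: "real mat \<Rightarrow> nat \<Rightarrow> nat \<Rightarrow> real" where
  "eff_res A k j = (let X = resistance_X A in X $$ (k,k) + X $$ (j,j) - 2 * X $$ (k,j))"

text \<open>Tree G^tree_{n,m}: nodes 0..n+m, root 0; path n -> n-1 -> ... -> 1 -> 0 (n edges) and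
path n+m -> ... -> n+1 -> 0 (m edges); leaves n and n+m. Unit weights.\<close>
definition tree_adj :: "nat \<Rightarrow> nat \<Rightarrow> real mat" where
  "tree_adj n m = mat (n+m+1) (n+m+1) (\<lambda>(i,j).
      if (1 \<le> i \<and> i \<le> n \<and> j = i - 1) \<or> (1 \<le> m \<and> i = n + 1 \<and> j = 0)
         \<or> (n + 2 \<le> i \<and> i \<le> n + m \<and> j = i - 1) then 1 else 0)"

definition r :: "nat \<Rightarrow> nat \<Rightarrow> real" where
  "r n m = eff_res (tree_adj n m) n (n + m)"

end

theory Submission
  imports Defs
begin

text \<open>
Grounding the root turns the Lyapunov equation of the two-leaf tree into a recursion along the
parent map, which is solved explicitly: for nodes of depths \<open>a\<close> and \<open>b\<close> the solution is
\<open>min a b\<close> on a common branch and \<open>F(a,b)/2\<close> across the branches, where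
\<open>F(a+1,b+1) = 1 + (F(a,b+1) + F(a+1,b))/2\<close> and \<open>F\<close> vanishes on the axes. Hence
\<open>r(n,m) = 2n + 2m - 2F(n,m)\<close>. Summing the recursion of \<open>F\<close> against the weights
\<open>1\<close> and \<open>2^k\<close> evaluates every sum in the statement in terms of
\<open>\<Sum>\<^sub>k F(n,k)\<close>, \<open>F(n,l+1)\<close> and \<open>F(n+1,l)\<close>, and the identity becomes a
rational-function identity in these quantities.
\<close>

text \<open>\<open>F(a,b)\<close>: the expected number of steps of the walk on \<open>\<nat>\<^sup>2\<close> from \<open>(a,b)\<close> that lowers
  a fairly chosen coordinate by one, until it reaches an axis.\<close>

fun hit_time :: "nat \<Rightarrow> nat \<Rightarrow> real" where
  "hit_time 0 b = 0"
| "hit_time (Suc a) 0 = 0"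
| "hit_time (Suc a) (Suc b) = 1 + (hit_time a (Suc b) + hit_time (Suc a) b) / 2"

lemma hit_time_0_right [simp]: "hit_time a 0 = 0"
  by (cases a) auto

lemma hit_time_sym: "hit_time a b = hit_time b a"
  by (induction a b rule: hit_time.induct) auto

lemma sum_pow2_hit_time:
  "(\<Sum>k=1..b. 2^k * hit_time a k) = 2^(b+1) * hit_time (Suc a) b - 2^(b+2) + 4"
  by (induction b) (auto simp: field_simps)

lemma hit_time_1_left: "hit_time 1 b = 2 - 2 / 2^b"
proof -
  have "2^(b+1) * hit_time (Suc 0) b = 2^(b+2) - (4::real)"
    using sum_pow2_hit_time[where a=0 and b=b] by simp
  then show ?thesis by (simp add: field_simps)
qed

lemma sum_hit_time_row_col:
  "(\<Sum>k=1..b. hit_time a k) + (\<Sum>k=1..a. hit_time k b) = 2 * real a * real b"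
proof (induction a)
  case (Suc a)
  have "(\<Sum>k=1..b. hit_time (Suc a) k) = 2 * real b + (\<Sum>k=1..b. hit_time a k) - hit_time (Suc a) b"
    by (induction b) (auto simp: field_simps)
  with Suc show ?case by (simp add: algebra_simps)
qed simp

lemma sum_pow2: "(\<Sum>k=1..n. (2::real)^k) = 2^(n+1) - 2"
  by (induction n) auto

lemma sum_of_nat_mult_pow2: "(\<Sum>k=1..n. real k * 2^k) = (real n - 1) * 2^(n+1) + 2"
  by (induction n) (auto simp: algebra_simps)

lemma sum_Icc_1_Suc: "(\<Sum>j=1..b. f (Suc j)) = (\<Sum>j=1..b. f j) + f (Suc b) - (f 1 :: real)"
  by (induction b) auto

lemma sum_of_nat_Icc_1: "(\<Sum>k=1..n. real k) = real n * (real n + 1) / 2"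
  by (induction n) (auto simp: field_simps)

abbreviation centering_mat :: "nat \<Rightarrow> real mat" where
  "centering_mat N \<equiv> 1\<^sub>m N - (1 / real N) \<cdot>\<^sub>m mat N N (\<lambda>_. 1)"

abbreviation ground_mat :: "nat \<Rightarrow> real mat" where
  "ground_mat N \<equiv> mat N N (\<lambda>(i, j). (if i = j then 1 else 0) - (if j = 0 then 1 else 0))"

definition helmert_scale :: "nat \<Rightarrow> real" where
  "helmert_scale k = 1 / sqrt ((real k + 1) * (real k + 2))"

definition helmert :: "nat \<Rightarrow> nat \<Rightarrow> real" where
  "helmert k j = (if j \<le> k then helmert_scale k else if j = k + 1 then - (real k + 1) * helmert_scale k else 0)"

definition helmert_mat :: "nat \<Rightarrow> real mat" where
  "helmert_mat N = mat (N - 1) N (\<lambda>(k, j). helmert k j)"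

lemma helmert_scale_sq: "helmert_scale k * helmert_scale k = 1 / ((real k + 1) * (real k + 2))"
  unfolding helmert_scale_def by (simp add: divide_simps)

lemma sum_helmert_support:
  assumes "k + 1 < N"
  shows "(\<Sum>j<N. helmert k j * f j) = (\<Sum>j<k+2. helmert k j * f j)"
  using assms by (intro sum.mono_neutral_right) (auto simp: helmert_def)

lemma sum_helmert_row:
  assumes "k + 1 < N"
  shows "(\<Sum>j<N. helmert k j) = 0"
proof -
  have "(\<Sum>j<k+1. helmert k j) = (\<Sum>j<k+1. helmert_scale k)"
    by (rule sum.cong) (auto simp: helmert_def)
  then have "(\<Sum>j<k+2. helmert k j) = 0"
    by (simp add: helmert_def algebra_simps)
  then show ?thesis using sum_helmert_support[OF assms, of "\<lambda>_. 1"] by simp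
qed

lemma sum_helmert_sq:
  assumes "k + 1 < N"
  shows "(\<Sum>j<N. helmert k j * helmert k j) = 1"
proof -
  have "(\<Sum>j<k+1. helmert k j * helmert k j) = (\<Sum>j<k+1. helmert_scale k * helmert_scale k)"
    by (rule sum.cong) (auto simp: helmert_def)
  then have "(\<Sum>j<k+2. helmert k j * helmert k j)
      = ((real k + 1) * (real k + 2)) * (helmert_scale k * helmert_scale k)"
    by (simp add: helmert_def algebra_simps)
  also have "\<dots> = 1"
    unfolding helmert_scale_sq by simp
  finally show ?thesis using sum_helmert_support[OF assms] by simp
qed

lemma helmert_rows_orthonormal:
  assumes "k + 1 < N" "k' + 1 < N"
  shows "(\<Sum>j<N. helmert k j * helmert k' j) = (if k = k' then 1 else 0)"
proof -
  have orth: "(\<Sum>j<N. helmert k j * helmert k' j) = 0" if "k < k'" "k' + 1 < N" for k k'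
  proof -
    have "(\<Sum>j<N. helmert k j * helmert k' j) = (\<Sum>j<N. helmert k j * helmert_scale k')"
      using that by (intro sum.cong) (auto simp: helmert_def)
    then show ?thesis using that by (simp add: sum_distrib_right[symmetric] sum_helmert_row)
  qed
  consider "k = k'" | "k < k'" | "k' < k" by linarith
  then show ?thesis
  proof cases
    case 1 then show ?thesis using assms by (simp add: sum_helmert_sq)
  next
    case 2 then show ?thesis using assms orth by simp
  next
    case 3 then show ?thesis using assms orth[of k' k] by (simp add: mult.commute)
  qed
qed

lemma sum_telescope_inverse_products:
  "a \<le> b \<Longrightarrow> (\<Sum>k\<in>{a..<b}. 1 / ((real k + 1) * (real k + 2))) = 1 / (real a + 1) - 1 / (real b + 1)"
proof (induction b)
  case (Suc b)
  show ?case
  proof (cases "a = Suc b")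
    case False
    with Suc have "a \<le> b" by simp
    moreover have "1 / ((real b + 1) * (real b + 2)) = 1 / (real b + 1) - 1 / (real b + 2)"
      by (simp add: field_simps)
    ultimately show ?thesis using Suc.IH by simp
  qed simp
qed simp

lemma helmert_columns:
  assumes "i \<le> j" "j < N"
  shows "(\<Sum>k<N-1. helmert k i * helmert k j) = (if i = j then 1 else 0) - 1 / real N"
proof (cases "j = 0")
  case True
  then have "(\<Sum>k<N-1. helmert k i * helmert k j) = (\<Sum>k\<in>{0..<N-1}. 1 / ((real k + 1) * (real k + 2)))"
    using assms by (intro sum.cong) (auto simp: helmert_def helmert_scale_sq)
  also have "\<dots> = 1 - 1 / real N"
    using sum_telescope_inverse_products[of 0 "N-1"] assms by (simp add: of_nat_diff)
  finally show ?thesis using True assms by simp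
next
  case False
  have split: "{..<N-1} = {..<j-1} \<union> insert (j-1) {j..<N-1}" and "real (j - 1) = real j - 1"
    using assms False by (auto simp: of_nat_diff)
  have "real j + real j * real j \<noteq> 0"
    using False by (simp add: add_nonneg_eq_0_iff)
  have "(\<Sum>k<N-1. helmert k i * helmert k j)
      = helmert (j-1) i * helmert (j-1) j + (\<Sum>k\<in>{j..<N-1}. 1 / ((real k + 1) * (real k + 2)))"
    unfolding split using assms False
    by (subst sum.union_disjoint) (auto simp: helmert_def helmert_scale_sq intro!: sum.neutral sum.cong)
  also have "helmert (j-1) i * helmert (j-1) j = (if i = j then real j / (real j + 1) else - 1 / (real j + 1))"
    using assms False \<open>real (j - 1) = real j - 1\<close> \<open>real j + real j * real j \<noteq> 0\<close>
    by (auto simp: helmert_def helmert_scale_sq field_simps)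
  also have "(\<Sum>k\<in>{j..<N-1}. 1 / ((real k + 1) * (real k + 2))) = 1 / (real j + 1) - 1 / real N"
    using sum_telescope_inverse_products[of j "N-1"] assms by (simp add: of_nat_diff)
  finally show ?thesis
    by (cases "i = j") (simp_all add: add_diff_eq[symmetric] add_divide_distrib[symmetric])
qed

lemma helmert_mat_props:
  assumes "N \<ge> 1"
  shows "helmert_mat N \<in> carrier_mat (N - 1) N \<and> helmert_mat N *\<^sub>v (vec N (\<lambda>_. 1)) = 0\<^sub>v (N - 1)
      \<and> helmert_mat N * (helmert_mat N)\<^sup>T = 1\<^sub>m (N - 1) \<and> (helmert_mat N)\<^sup>T * helmert_mat N = centering_mat N"
proof (intro conjI)
  show "helmert_mat N \<in> carrier_mat (N - 1) N" unfolding helmert_mat_def by simp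
  show "helmert_mat N *\<^sub>v (vec N (\<lambda>_. 1)) = 0\<^sub>v (N - 1)"
    by (intro eq_vecI) (auto simp: helmert_mat_def scalar_prod_def atLeast0LessThan sum_helmert_row)
  show "helmert_mat N * (helmert_mat N)\<^sup>T = 1\<^sub>m (N - 1)"
    by (intro eq_matI) (auto simp: helmert_mat_def scalar_prod_def atLeast0LessThan helmert_rows_orthonormal)
  show "(helmert_mat N)\<^sup>T * helmert_mat N = centering_mat N"
  proof (intro eq_matI)
    fix i j assume "i < dim_row (centering_mat N)" "j < dim_col (centering_mat N)"
    then have ij: "i < N" "j < N" by simp_all
    have "(\<Sum>k<N-1. helmert k i * helmert k j) = (if i = j then 1 else 0) - 1 / real N"
      using helmert_columns[of i j N] helmert_columns[of j i N] ij by (cases "i \<le> j") (simp_all add: mult.commute)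
    then show "((helmert_mat N)\<^sup>T * helmert_mat N) $$ (i, j) = centering_mat N $$ (i, j)"
      using ij by (simp add: helmert_mat_def scalar_prod_def atLeast0LessThan)
  qed (auto simp: helmert_mat_def)
qed

lemma proj_Q_props:
  assumes "N \<ge> 1"
  shows "proj_Q N \<in> carrier_mat (N - 1) N \<and> proj_Q N *\<^sub>v (vec N (\<lambda>_. 1)) = 0\<^sub>v (N - 1)
      \<and> proj_Q N * (proj_Q N)\<^sup>T = 1\<^sub>m (N - 1) \<and> (proj_Q N)\<^sup>T * proj_Q N = centering_mat N"
  unfolding proj_Q_def by (rule someI_ex, rule exI, rule helmert_mat_props[OF assms])

lemma assoc_mult_mat_dims:
  "dim_col A = dim_row B \<Longrightarrow> dim_col B = dim_row C \<Longrightarrow> A * B * C = A * (B * (C :: 'a::semiring_0 mat))"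
  by (rule assoc_mult_mat[of _ _ "dim_col A" _ "dim_col B" _ "dim_col C"]) (auto intro: carrier_matI)

lemma transpose_mult_dims:
  "dim_col A = dim_row B \<Longrightarrow> (A * B)\<^sup>T = B\<^sup>T * (A\<^sup>T :: 'a::comm_semiring_0 mat)"
  by (rule transpose_mult[of _ _ "dim_col A" _ "dim_col B"]) (auto intro: carrier_matI)

lemma mult_add_distrib_mat_dims:
  "dim_col A = dim_row B \<Longrightarrow> dim_row B = dim_row C \<Longrightarrow> dim_col B = dim_col C
    \<Longrightarrow> A * (B + C) = A * B + A * (C :: 'a::semiring_0 mat)"
  by (rule mult_add_distrib_mat[of _ _ "dim_col A" _ "dim_col B"]) (auto intro: carrier_matI)

lemma add_mult_distrib_mat_dims:
  "dim_row A = dim_row B \<Longrightarrow> dim_col A = dim_col B \<Longrightarrow> dim_col A = dim_row C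
    \<Longrightarrow> (A + B) * C = A * C + B * (C :: 'a::semiring_0 mat)"
  by (rule add_mult_distrib_mat[of _ "dim_row A" "dim_col A" _ _ "dim_col C"]) (auto intro: carrier_matI)

lemmas mat_dims_simps =
  assoc_mult_mat_dims transpose_mult_dims mult_add_distrib_mat_dims add_mult_distrib_mat_dims

lemma index_mult_mat_sum:
  "A \<in> carrier_mat a b \<Longrightarrow> B \<in> carrier_mat b c \<Longrightarrow> i < a \<Longrightarrow> j < c
    \<Longrightarrow> (A * B) $$ (i, j) = (\<Sum>k<b. A $$ (i, k) * B $$ (k, j))"
  by (auto simp: scalar_prod_def atLeast0LessThan intro!: sum.cong)

lemma index_mult_centering_mat:
  assumes "M \<in> carrier_mat a N" "i < a" "j < N"
  shows "(M * centering_mat N) $$ (i, j) = M $$ (i, j) - (\<Sum>k<N. M $$ (i, k)) / real N"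
proof -
  have "(M * centering_mat N) $$ (i, j)
      = (\<Sum>k<N. (if k = j then M $$ (i, k) else 0) - M $$ (i, k) / real N)"
    using assms by (subst index_mult_mat_sum) (auto intro!: sum.cong simp: algebra_simps)
  then show ?thesis using assms by (simp add: sum_subtractf sum_divide_distrib)
qed

lemma index_centering_mat_mult:
  assumes "M \<in> carrier_mat N b" "i < N" "j < b"
  shows "(centering_mat N * M) $$ (i, j) = M $$ (i, j) - (\<Sum>k<N. M $$ (k, j)) / real N"
proof -
  have "(centering_mat N * M) $$ (i, j)
      = (\<Sum>k<N. (if k = i then M $$ (k, j) else 0) - M $$ (k, j) / real N)"
    using assms by (subst index_mult_mat_sum) (auto intro!: sum.cong simp: algebra_simps)
  then show ?thesis using assms by (simp add: sum_subtractf sum_divide_distrib)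
qed

lemma mult_centering_mat_right:
  "M \<in> carrier_mat a N \<Longrightarrow> (\<And>i. i < a \<Longrightarrow> (\<Sum>k<N. M $$ (i, k)) = 0) \<Longrightarrow> M * centering_mat N = M"
  by (intro eq_matI) (auto simp del: index_mult_mat(1) simp: index_mult_centering_mat)

lemma mult_centering_mat_left:
  "M \<in> carrier_mat N b \<Longrightarrow> (\<And>j. j < b \<Longrightarrow> (\<Sum>k<N. M $$ (k, j)) = 0) \<Longrightarrow> centering_mat N * M = M"
  by (intro eq_matI) (auto simp del: index_mult_mat(1) simp: index_centering_mat_mult)

lemma index_ground_mat_mult:
  assumes "M \<in> carrier_mat N b" "i < N" "j < b"
  shows "(ground_mat N * M) $$ (i, j) = M $$ (i, j) - M $$ (0, j)"
proof -
  have "(ground_mat N * M) $$ (i, j)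
      = (\<Sum>k<N. (if k = i then M $$ (k, j) else 0) - (if k = 0 then M $$ (k, j) else 0))"
    using assms by (subst index_mult_mat_sum) (auto intro!: sum.cong)
  then show ?thesis using assms by (simp add: sum_subtractf)
qed

lemma index_mult_ground_mat_T:
  assumes "M \<in> carrier_mat a N" "i < a" "j < N"
  shows "(M * (ground_mat N)\<^sup>T) $$ (i, j) = M $$ (i, j) - M $$ (i, 0)"
proof -
  have "(M * (ground_mat N)\<^sup>T) $$ (i, j)
      = (\<Sum>k<N. (if k = j then M $$ (i, k) else 0) - (if k = 0 then M $$ (i, k) else 0))"
    using assms by (subst index_mult_mat_sum) (auto intro!: sum.cong)
  then show ?thesis using assms by (simp add: sum_subtractf)
qed

lemma mult_ground_mat_right:
  assumes "M \<in> carrier_mat a N" and "\<And>i. i < a \<Longrightarrow> (\<Sum>k<N. M $$ (i, k)) = 0"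
  shows "M * ground_mat N = M"
proof (rule eq_matI)
  fix i j assume "i < dim_row M" "j < dim_col M"
  then have ij: "i < a" "j < N" using assms(1) by auto
  have "(M * ground_mat N) $$ (i, j)
      = (\<Sum>k<N. (if k = j then M $$ (i, k) else 0) - (if j = 0 then M $$ (i, k) else 0))"
    using assms(1) ij by (subst index_mult_mat_sum) (auto intro!: sum.cong)
  then show "(M * ground_mat N) $$ (i, j) = M $$ (i, j)"
    using assms(2)[OF ij(1)] ij by (cases "j = 0") (simp_all add: sum_subtractf)
qed (use assms(1) in auto)

lemma mult_ground_mat_left:
  "M \<in> carrier_mat N b \<Longrightarrow> (\<And>j. j < b \<Longrightarrow> M $$ (0, j) = 0) \<Longrightarrow> ground_mat N * M = M"
  by (intro eq_matI) (auto simp del: index_mult_mat(1) simp: index_ground_mat_mult)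

lemma mult_ground_mat_T_right:
  "M \<in> carrier_mat a N \<Longrightarrow> (\<And>i. i < a \<Longrightarrow> M $$ (i, 0) = 0) \<Longrightarrow> M * (ground_mat N)\<^sup>T = M"
  by (intro eq_matI) (auto simp del: index_mult_mat(1) simp: index_mult_ground_mat_T)

lemma mult_ground_mat_T_left:
  assumes "M \<in> carrier_mat N b" and "\<And>j. j < b \<Longrightarrow> (\<Sum>k<N. M $$ (k, j)) = 0"
  shows "(ground_mat N)\<^sup>T * M = M"
proof -
  have "M\<^sup>T * ground_mat N = M\<^sup>T"
    using assms by (intro mult_ground_mat_right[of _ b]) auto
  then have "((ground_mat N)\<^sup>T * M)\<^sup>T\<^sup>T = M\<^sup>T\<^sup>T"
    using assms(1) by (simp add: transpose_mult_dims)
  then show ?thesis by simp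
qed

lemma index_ground_mat_gram:
  "i < N \<Longrightarrow> j < N \<Longrightarrow> (ground_mat N * (ground_mat N)\<^sup>T) $$ (i, j)
    = (if i = j then 1 else 0) - (if i = 0 then 1 else 0) - (if j = 0 then 1 else 0) + 1"
  by (subst index_mult_ground_mat_T[of _ N]) auto

lemma sum_transpose_col:
  "M \<in> carrier_mat a N \<Longrightarrow> j < a \<Longrightarrow> (\<Sum>k<N. M\<^sup>T $$ (k, j)) = (\<Sum>k<N. M $$ (j, k))"
  by (intro sum.cong) auto

lemma laplacian_carrier: "laplacian A \<in> carrier_mat (dim_row A) (dim_row A)"
  unfolding laplacian_def by simp

lemma laplacian_row_sum: "i < dim_row A \<Longrightarrow> (\<Sum>k<dim_row A. laplacian A $$ (i, k)) = 0"
  unfolding laplacian_def by (simp add: sum_subtractf)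

lemma laplacian_row_zero:
  "(\<And>j. j < dim_row A \<Longrightarrow> A $$ (v, j) = 0) \<Longrightarrow> v < dim_row A \<Longrightarrow> j < dim_row A
    \<Longrightarrow> laplacian A $$ (v, j) = 0"
  unfolding laplacian_def by (auto intro!: sum.neutral)

text \<open>The Lyapunov equation with the projection onto \<open>\<one>\<^sup>\<bottom>\<close> replaced by grounding node 0; on a tree it
  decouples along the parent map.\<close>

definition grounded_lyap_sol :: "real mat \<Rightarrow> real mat \<Rightarrow> bool" where
  "grounded_lyap_sol L Z \<longleftrightarrow> Z \<in> carrier_mat (dim_row L) (dim_row L)
     \<and> L * Z + Z * L\<^sup>T = ground_mat (dim_row L) * (ground_mat (dim_row L))\<^sup>T
     \<and> (\<forall>j < dim_row L. Z $$ (0, j) = 0) \<and> (\<forall>i < dim_row L. Z $$ (i, 0) = 0)"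

lemma grounded_lyap_sol_transpose:
  assumes "grounded_lyap_sol L Z" "L \<in> carrier_mat N N"
  shows "grounded_lyap_sol L Z\<^sup>T"
proof -
  have "(L * Z + Z * L\<^sup>T)\<^sup>T = L * Z\<^sup>T + Z\<^sup>T * L\<^sup>T"
    using assms by (subst transpose_add) (auto simp: grounded_lyap_sol_def transpose_mult_dims)
  moreover have "(ground_mat N * (ground_mat N)\<^sup>T)\<^sup>T = ground_mat N * (ground_mat N)\<^sup>T"
    by (simp add: transpose_mult_dims)
  ultimately show ?thesis using assms by (auto simp: grounded_lyap_sol_def)
qed

context
  fixes N :: nat and L :: "real mat"
  assumes L_carrier: "L \<in> carrier_mat N N" and N_pos: "0 < N"
    and L_row_sum: "\<And>i. i < N \<Longrightarrow> (\<Sum>k<N. L $$ (i, k)) = 0"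
    and L_root_row: "\<And>j. j < N \<Longrightarrow> L $$ (0, j) = 0"
begin

private abbreviation "Q \<equiv> proj_Q N"
private abbreviation "P \<equiv> ground_mat N"
private abbreviation "Ctr \<equiv> centering_mat N"

private lemma dims [simp]: "dim_row L = N" "dim_col L = N" "dim_row Q = N - 1" "dim_col Q = N"
  using L_carrier proj_Q_props[of N] N_pos by auto

private lemma Q_facts: "Q * Q\<^sup>T = 1\<^sub>m (N - 1)" "Q\<^sup>T * Q = Ctr" "Q * P = Q" "Q * Ctr = Q" "Ctr * Q\<^sup>T = Q\<^sup>T"
proof -
  have Q: "Q \<in> carrier_mat (N - 1) N" "Q *\<^sub>v vec N (\<lambda>_. 1) = 0\<^sub>v (N - 1)"
    and QQt: "Q * Q\<^sup>T = 1\<^sub>m (N - 1)" and QtQ: "Q\<^sup>T * Q = Ctr"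
    using proj_Q_props[of N] N_pos by auto
  show "Q * Q\<^sup>T = 1\<^sub>m (N - 1)" "Q\<^sup>T * Q = Ctr" by (fact QQt, fact QtQ)
  have "(\<Sum>k<N. Q $$ (i, k)) = 0" if "i < N - 1" for i
    using arg_cong[OF Q(2), of "\<lambda>v. v $ i"] that by (simp add: scalar_prod_def lessThan_atLeast0)
  then show "Q * P = Q" using Q(1) by (rule mult_ground_mat_right[rotated])
  have "Q * Ctr = (Q * Q\<^sup>T) * Q" unfolding QtQ[symmetric] by (simp add: assoc_mult_mat_dims)
  then show "Q * Ctr = Q" unfolding QQt by simp
  have "Ctr * Q\<^sup>T = Q\<^sup>T * (Q * Q\<^sup>T)" unfolding QtQ[symmetric] by (simp add: assoc_mult_mat_dims)
  then show "Ctr * Q\<^sup>T = Q\<^sup>T" unfolding QQt by simp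
qed

private lemma L_col_sum: "j < N \<Longrightarrow> (\<Sum>k<N. L\<^sup>T $$ (k, j)) = 0"
  using L_carrier L_row_sum[of j] by (simp add: sum_transpose_col)

private lemma absorption:
  "L * Ctr = L" "Ctr * L\<^sup>T = L\<^sup>T" "P * L = L" "L * P = L" "L\<^sup>T * P\<^sup>T = L\<^sup>T" "P\<^sup>T * L\<^sup>T = L\<^sup>T"
  "P * Ctr = P" "Ctr * P = Ctr" "Ctr * P\<^sup>T = P\<^sup>T" "P\<^sup>T * Ctr = Ctr"
proof -
  have Lt: "L\<^sup>T \<in> carrier_mat N N" using L_carrier by simp
  have Ctr: "Ctr \<in> carrier_mat N N" by (intro carrier_matI) simp_all
  show "L * Ctr = L" "L * P = L"
    using L_carrier L_row_sum by (blast intro: mult_centering_mat_right mult_ground_mat_right)+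
  show "Ctr * L\<^sup>T = L\<^sup>T" "P\<^sup>T * L\<^sup>T = L\<^sup>T"
    using Lt L_col_sum by (blast intro: mult_centering_mat_left mult_ground_mat_T_left)+
  show "P * L = L" using L_carrier L_root_row by (rule mult_ground_mat_left)
  show "L\<^sup>T * P\<^sup>T = L\<^sup>T" using Lt by (rule mult_ground_mat_T_right) (use L_root_row L_carrier in simp)
  show "P * Ctr = P" by (rule mult_centering_mat_right[of _ N]) (simp_all add: sum_subtractf)
  show "Ctr * P = Ctr" using Ctr by (rule mult_ground_mat_right) (simp add: sum_subtractf)
  show "Ctr * P\<^sup>T = P\<^sup>T"
    by (rule mult_centering_mat_left[where b = N]) (simp_all add: sum_transpose_col[of _ N] sum_subtractf)
  show "P\<^sup>T * Ctr = Ctr" using Ctr by (rule mult_ground_mat_T_left) (simp add: sum_subtractf)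
qed

private lemma lyap_eq_of_grounded:
  assumes "grounded_lyap_sol L W"
  shows "(Q * L * Q\<^sup>T) * (Q * W * Q\<^sup>T) + (Q * W * Q\<^sup>T) * (Q * L * Q\<^sup>T)\<^sup>T = 1\<^sub>m (N - 1)"
proof -
  have W: "W \<in> carrier_mat N N" and eq: "L * W + W * L\<^sup>T = P * P\<^sup>T"
    using assms by (auto simp: grounded_lyap_sol_def)
  have "(Q * L * Q\<^sup>T) * (Q * W * Q\<^sup>T) + (Q * W * Q\<^sup>T) * (Q * L * Q\<^sup>T)\<^sup>T
      = Q * ((L * (Q\<^sup>T * Q)) * W + W * ((Q\<^sup>T * Q) * L\<^sup>T)) * Q\<^sup>T"
    using W by (simp add: mat_dims_simps)
  also have "\<dots> = Q * (P * P\<^sup>T) * Q\<^sup>T"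
    by (simp add: Q_facts absorption eq)
  also have "\<dots> = (Q * P) * (Q * P)\<^sup>T"
    by (simp add: mat_dims_simps)
  finally show ?thesis by (simp add: Q_facts)
qed

private lemma grounded_of_lyap_eq:
  assumes S: "S \<in> carrier_mat (N - 1) (N - 1)"
    and eq: "(Q * L * Q\<^sup>T) * S + S * (Q * L * Q\<^sup>T)\<^sup>T = 1\<^sub>m (N - 1)"
  obtains Z where "grounded_lyap_sol L Z" "S = Q * Z * Q\<^sup>T"
proof
  define E where "E = Q\<^sup>T * S * Q"
  have E: "E \<in> carrier_mat N N" unfolding E_def by (intro carrier_matI) simp_all
  have "Ctr * L * E + E * L\<^sup>T * Ctr = Q\<^sup>T * ((Q * L * Q\<^sup>T) * S + S * (Q * L * Q\<^sup>T)\<^sup>T) * Q"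
    unfolding E_def Q_facts(2)[symmetric] using S by (simp add: mat_dims_simps)
  then have centered: "Ctr * L * E + E * L\<^sup>T * Ctr = Ctr"
    unfolding eq by (simp add: Q_facts)
  define Z where "Z = P * E * P\<^sup>T"
  have "L * Z = (L * P) * E * P\<^sup>T" "Z * L\<^sup>T = P * E * (P\<^sup>T * L\<^sup>T)"
    unfolding Z_def using E by (simp_all add: assoc_mult_mat_dims)
  then have "L * Z + Z * L\<^sup>T = L * E * P\<^sup>T + P * E * L\<^sup>T"
    by (simp only: absorption)
  also have "\<dots> = (P * Ctr) * L * E * P\<^sup>T + P * E * (L\<^sup>T * (Ctr * P\<^sup>T))"
    by (simp only: absorption)
  also have "\<dots> = P * (Ctr * L * E + E * L\<^sup>T * Ctr) * P\<^sup>T"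
    using E by (simp add: mat_dims_simps)
  finally have "L * Z + Z * L\<^sup>T = P * P\<^sup>T"
    unfolding centered by (simp add: absorption)
  moreover have PE: "P * E \<in> carrier_mat N N" using E by (intro carrier_matI) simp_all
  then have "Z \<in> carrier_mat N N" "\<forall>j < N. Z $$ (0, j) = 0" "\<forall>i < N. Z $$ (i, 0) = 0"
    unfolding Z_def using E N_pos
    by (auto simp del: index_mult_mat(1) simp: index_ground_mat_mult index_mult_ground_mat_T)
  ultimately show "grounded_lyap_sol L Z" by (simp add: grounded_lyap_sol_def)
  have "S = (Q * Q\<^sup>T) * S * (Q * Q\<^sup>T)" using S by (simp add: Q_facts)
  also have "\<dots> = Q * E * Q\<^sup>T"
    unfolding E_def using S by (simp add: mat_dims_simps)
  also have "\<dots> = (Q * (Ctr * P)) * E * ((P\<^sup>T * Ctr) * Q\<^sup>T)"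
    by (simp only: absorption Q_facts)
  also have "\<dots> = (Q * Ctr) * Z * (Ctr * Q\<^sup>T)"
    unfolding Z_def using E by (simp add: mat_dims_simps)
  also have "\<dots> = Q * Z * Q\<^sup>T"
    by (simp only: Q_facts)
  finally show "S = Q * Z * Q\<^sup>T" .
qed

lemma lyap_Sigma_grounded:
  assumes unique: "\<And>Z. grounded_lyap_sol L Z \<longleftrightarrow> Z = W"
  shows "lyap_Sigma (proj_Q N * L * (proj_Q N)\<^sup>T) = proj_Q N * W * (proj_Q N)\<^sup>T"
  unfolding lyap_Sigma_def
proof (rule the_equality)
  have "W \<in> carrier_mat N N" using unique[of W] by (simp add: grounded_lyap_sol_def)
  then show "Q * W * Q\<^sup>T \<in> carrier_mat (dim_row (Q * L * Q\<^sup>T)) (dim_row (Q * L * Q\<^sup>T))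
      \<and> (Q * L * Q\<^sup>T) * (Q * W * Q\<^sup>T) + (Q * W * Q\<^sup>T) * (Q * L * Q\<^sup>T)\<^sup>T = 1\<^sub>m (dim_row (Q * L * Q\<^sup>T))"
    using lyap_eq_of_grounded unique by (auto intro: carrier_matI)
next
  fix S assume "S \<in> carrier_mat (dim_row (Q * L * Q\<^sup>T)) (dim_row (Q * L * Q\<^sup>T))
      \<and> (Q * L * Q\<^sup>T) * S + S * (Q * L * Q\<^sup>T)\<^sup>T = 1\<^sub>m (dim_row (Q * L * Q\<^sup>T))"
  then obtain Z where "grounded_lyap_sol L Z" "S = Q * Z * Q\<^sup>T"
    using grounded_of_lyap_eq by auto
  then show "S = Q * W * Q\<^sup>T" using unique by simp
qed

end

lemma index_centering_sandwich:
  assumes "W \<in> carrier_mat N N" "i < N" "j < N"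
  shows "(centering_mat N * W * centering_mat N) $$ (i, j)
    = W $$ (i, j) - (\<Sum>k<N. W $$ (k, j)) / real N - (\<Sum>k<N. W $$ (i, k)) / real N
      + (\<Sum>k<N. \<Sum>l<N. W $$ (l, k)) / real N ^ 2"
proof -
  have CW: "centering_mat N * W \<in> carrier_mat N N" using assms by (intro carrier_matI) auto
  have "(\<Sum>k<N. (centering_mat N * W) $$ (i, k))
      = (\<Sum>k<N. W $$ (i, k)) - (\<Sum>k<N. \<Sum>l<N. W $$ (l, k)) / real N"
    using assms by (simp add: index_centering_mat_mult sum_subtractf sum_divide_distrib del: index_mult_mat(1))
  then show ?thesis
    using assms by (simp add: index_mult_centering_mat[OF CW] index_centering_mat_mult power2_eq_square
        diff_divide_distrib divide_divide_eq_left del: index_mult_mat(1))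
qed

lemma eff_res_grounded:
  assumes "dim_row A = N" "0 < N" and root: "\<And>j. j < N \<Longrightarrow> A $$ (0, j) = 0"
    and unique: "\<And>Z. grounded_lyap_sol (laplacian A) Z \<longleftrightarrow> Z = W"
    and "k < N" "j < N"
  shows "eff_res A k j = 2 * (W $$ (k, k) + W $$ (j, j) - 2 * W $$ (k, j))"
proof -
  let ?Q = "proj_Q N"
  have Q_dims: "dim_row ?Q = N - 1" "dim_col ?Q = N" using proj_Q_props[of N] \<open>0 < N\<close> by auto
  have L: "laplacian A \<in> carrier_mat N N"
    using laplacian_carrier[of A] assms(1) by simp
  have W: "grounded_lyap_sol (laplacian A) W" using unique by simp
  then have "W\<^sup>T = W" using unique grounded_lyap_sol_transpose[OF W L] by blast
  from W have Wc: "W \<in> carrier_mat N N" using L by (simp add: grounded_lyap_sol_def)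
  have "lyap_Sigma (?Q * laplacian A * ?Q\<^sup>T) = ?Q * W * ?Q\<^sup>T"
    using L assms laplacian_row_sum[of _ A] laplacian_row_zero[of A 0]
    by (intro lyap_Sigma_grounded) auto
  moreover have "?Q\<^sup>T * (?Q * W * ?Q\<^sup>T) * ?Q = (?Q\<^sup>T * ?Q) * W * (?Q\<^sup>T * ?Q)"
    using Wc Q_dims by (simp add: mat_dims_simps)
  ultimately have "resistance_X A = 2 \<cdot>\<^sub>m (centering_mat N * W * centering_mat N)"
    unfolding resistance_X_def Let_def using assms(1) proj_Q_props[of N] \<open>0 < N\<close> by simp
  moreover have col_row: "(\<Sum>l<N. W $$ (l, a)) = (\<Sum>l<N. W $$ (a, l))" if "a < N" for a
    using sum_transpose_col[OF Wc that] \<open>W\<^sup>T = W\<close> by simp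
  ultimately show ?thesis
    unfolding eff_res_def Let_def using assms Wc
    by (simp add: index_centering_sandwich col_row del: index_mult_mat(1))
qed

definition depth_cov :: "bool \<Rightarrow> nat \<Rightarrow> nat \<Rightarrow> real" where
  "depth_cov same x y = (if same then real (min x y) else hit_time x y / 2)"

lemma depth_cov_0 [simp]: "depth_cov s 0 y = 0" "depth_cov s x 0 = 0"
  by (auto simp: depth_cov_def)

lemma depth_cov_sym: "depth_cov s x y = depth_cov s y x"
  by (auto simp: depth_cov_def hit_time_sym[of x y])

lemma depth_cov_rec:
  assumes "1 \<le> x" "1 \<le> y"
  shows "2 * depth_cov s x y - depth_cov s (x - 1) y - depth_cov s x (y - 1) = 1 + (if s \<and> x = y then 1 else 0)"
proof -
  obtain a b where "x = Suc a" "y = Suc b" using assms by (metis Suc_le_D One_nat_def)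
  then show ?thesis by (cases s) (auto simp: depth_cov_def min_def field_simps)
qed

definition tree_parent :: "nat \<Rightarrow> nat \<Rightarrow> nat" where
  "tree_parent n i = (if i = n + 1 then 0 else i - 1)"

definition tree_depth :: "nat \<Rightarrow> nat \<Rightarrow> nat" where
  "tree_depth n i = (if i \<le> n then i else i - n)"

definition tree_cov :: "nat \<Rightarrow> nat \<Rightarrow> nat \<Rightarrow> real" where
  "tree_cov n i j = depth_cov ((i \<le> n) = (j \<le> n)) (tree_depth n i) (tree_depth n j)"

lemma tree_depth_parent: "1 \<le> i \<Longrightarrow> tree_depth n (tree_parent n i) = tree_depth n i - 1"
  by (auto simp: tree_depth_def tree_parent_def)

lemma tree_cov_0 [simp]: "tree_cov n 0 j = 0" "tree_cov n i 0 = 0"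
  by (auto simp: tree_cov_def tree_depth_def)

lemma tree_cov_sym: "tree_cov n i j = tree_cov n j i"
proof -
  have "((j \<le> n) = (i \<le> n)) = ((i \<le> n) = (j \<le> n))" by auto
  then show ?thesis unfolding tree_cov_def by (simp only: depth_cov_sym[of _ "tree_depth n i"])
qed

lemma tree_cov_parent_left:
  assumes "1 \<le> i"
  shows "tree_cov n (tree_parent n i) j = depth_cov ((i \<le> n) = (j \<le> n)) (tree_depth n i - 1) (tree_depth n j)"
proof (cases "tree_parent n i = 0")
  case True
  then show ?thesis using tree_depth_parent[OF assms, of n] by (simp add: tree_depth_def)
next
  case False
  then have "(tree_parent n i \<le> n) = (i \<le> n)" using assms by (auto simp: tree_parent_def)
  then show ?thesis unfolding tree_cov_def using tree_depth_parent[OF assms, of n] by simp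
qed

lemma tree_cov_parent_right:
  assumes "1 \<le> j"
  shows "tree_cov n i (tree_parent n j) = depth_cov ((i \<le> n) = (j \<le> n)) (tree_depth n i) (tree_depth n j - 1)"
proof -
  have "((j \<le> n) = (i \<le> n)) = ((i \<le> n) = (j \<le> n))" by auto
  then show ?thesis
    using tree_cov_parent_left[OF assms, of n i] by (simp add: tree_cov_sym[of n i] depth_cov_sym)
qed

lemma tree_cov_rec:
  assumes "1 \<le> i" "1 \<le> j"
  shows "2 * tree_cov n i j - tree_cov n (tree_parent n i) j - tree_cov n i (tree_parent n j)
    = 1 + (if i = j then 1 else 0)"
proof -
  have "((i \<le> n) = (j \<le> n) \<and> tree_depth n i = tree_depth n j) = (i = j)"
    using assms by (auto simp: tree_depth_def)
  moreover have "1 \<le> tree_depth n i" "1 \<le> tree_depth n j"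
    using assms by (auto simp: tree_depth_def)
  ultimately show ?thesis
    using depth_cov_rec[of "tree_depth n i" "tree_depth n j" "(i \<le> n) = (j \<le> n)"]
    unfolding tree_cov_parent_left[OF assms(1)] tree_cov_parent_right[OF assms(2)] tree_cov_def[of n i j]
    by simp
qed

context
  fixes n m :: nat
  assumes m_pos: "1 \<le> m"
begin

declare sum.lessThan_Suc [simp del]

private abbreviation "N \<equiv> Suc (n + m)"
private abbreviation "L \<equiv> laplacian (tree_adj n m)"
private abbreviation "W \<equiv> mat N N (\<lambda>(i, j). tree_cov n i j)"

private lemma tree_parent_less: "i < N \<Longrightarrow> tree_parent n i < N"
  by (auto simp: tree_parent_def)

private lemma tree_adj_dims [simp]: "dim_row (tree_adj n m) = N" "dim_col (tree_adj n m) = N"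
  by (auto simp: tree_adj_def)

private lemma tree_adj_entry:
  "i < N \<Longrightarrow> j < N \<Longrightarrow> tree_adj n m $$ (i, j) = (if 1 \<le> i \<and> j = tree_parent n i then 1 else 0)"
  using m_pos unfolding tree_adj_def tree_parent_def by auto

private lemma L_carrier: "L \<in> carrier_mat N N"
  using laplacian_carrier[of "tree_adj n m"] by simp

private lemma L_entry:
  assumes "i < N" "j < N"
  shows "L $$ (i, j) = (if i = j \<and> 1 \<le> i then 1 else 0) - (if 1 \<le> i \<and> j = tree_parent n i then 1 else 0)"
proof -
  have "(\<Sum>k<N. tree_adj n m $$ (i, k)) = (\<Sum>k<N. if k = tree_parent n i then (if 1 \<le> i then 1 else 0) else 0)"
    using assms by (intro sum.cong) (auto simp: tree_adj_entry)
  then show ?thesis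
    unfolding laplacian_def using assms tree_parent_less[of i] tree_parent_less[of j]
    by (simp add: tree_adj_entry)
qed

private lemma index_L_mult:
  assumes "Z \<in> carrier_mat N N" "i < N" "j < N"
  shows "(L * Z) $$ (i, j) = (if 1 \<le> i then Z $$ (i, j) - Z $$ (tree_parent n i, j) else 0)"
proof -
  have "(L * Z) $$ (i, j) = (\<Sum>k<N. (if k = i then (if 1 \<le> i then Z $$ (k, j) else 0) else 0)
      - (if k = tree_parent n i then (if 1 \<le> i then Z $$ (k, j) else 0) else 0))"
    using assms by (subst index_mult_mat_sum[OF L_carrier]) (auto intro!: sum.cong simp: L_entry)
  then show ?thesis using assms tree_parent_less[of i] by (simp add: sum_subtractf)
qed

private lemma index_mult_L_T:
  assumes "Z \<in> carrier_mat N N" "i < N" "j < N"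
  shows "(Z * L\<^sup>T) $$ (i, j) = (if 1 \<le> j then Z $$ (i, j) - Z $$ (i, tree_parent n j) else 0)"
proof -
  have "(Z * L\<^sup>T) $$ (i, j) = (\<Sum>k<N. (if k = j then (if 1 \<le> j then Z $$ (i, k) else 0) else 0)
      - (if k = tree_parent n j then (if 1 \<le> j then Z $$ (i, k) else 0) else 0))"
    using assms L_carrier by (subst index_mult_mat_sum[OF assms(1)]) (auto intro!: sum.cong simp: L_entry)
  then show ?thesis using assms tree_parent_less[of j] by (simp add: sum_subtractf)
qed

private lemma lyap_entry:
  assumes "Z \<in> carrier_mat N N" "i < N" "j < N"
  shows "(L * Z + Z * L\<^sup>T) $$ (i, j)
    = (if 1 \<le> i then Z $$ (i, j) - Z $$ (tree_parent n i, j) else 0)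
      + (if 1 \<le> j then Z $$ (i, j) - Z $$ (i, tree_parent n j) else 0)"
  using assms L_carrier by (simp add: index_L_mult index_mult_L_T del: index_mult_mat(1))

private lemma tree_cov_solves: "grounded_lyap_sol L W"
proof -
  have "L * W + W * L\<^sup>T = ground_mat N * (ground_mat N)\<^sup>T"
  proof (rule eq_matI)
    fix i j assume "i < dim_row (ground_mat N * (ground_mat N)\<^sup>T)" "j < dim_col (ground_mat N * (ground_mat N)\<^sup>T)"
    then have ij: "i < N" "j < N" by auto
    show "(L * W + W * L\<^sup>T) $$ (i, j) = (ground_mat N * (ground_mat N)\<^sup>T) $$ (i, j)"
      using ij tree_cov_rec[of i j n]
      by (cases "i = 0 \<or> j = 0")
        (auto simp: lyap_entry index_ground_mat_gram tree_parent_less simp del: index_mult_mat(1))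
  qed (use L_carrier in auto)
  then show ?thesis using L_carrier by (auto simp: grounded_lyap_sol_def)
qed

private lemma grounded_lyap_sol_unique:
  assumes "grounded_lyap_sol L Z"
  shows "Z = W"
proof -
  have Z: "Z \<in> carrier_mat N N" "L * Z + Z * L\<^sup>T = ground_mat N * (ground_mat N)\<^sup>T"
    and Z0: "\<And>j. j < N \<Longrightarrow> Z $$ (0, j) = 0" "\<And>i. i < N \<Longrightarrow> Z $$ (i, 0) = 0"
    using assms L_carrier by (auto simp: grounded_lyap_sol_def)
  have rec: "2 * Z $$ (i, j) - Z $$ (tree_parent n i, j) - Z $$ (i, tree_parent n j) = 1 + (if i = j then 1 else 0)"
    if "1 \<le> i" "1 \<le> j" "i < N" "j < N" for i j
    using arg_cong[OF Z(2), of "\<lambda>M. M $$ (i, j)"] that Z(1)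
    by (simp add: lyap_entry index_ground_mat_gram del: index_mult_mat(1))
  have "Z $$ (i, j) = tree_cov n i j" if "i < N" "j < N" for i j
    using that
  proof (induction "tree_depth n i + tree_depth n j" arbitrary: i j rule: less_induct)
    case less
    show ?case
    proof (cases "i = 0 \<or> j = 0")
      case True then show ?thesis using Z0 less.prems by auto
    next
      case False
      then have "1 \<le> i" "1 \<le> j" "1 \<le> tree_depth n i" "1 \<le> tree_depth n j"
        by (auto simp: tree_depth_def)
      then have "Z $$ (tree_parent n i, j) = tree_cov n (tree_parent n i) j"
        and "Z $$ (i, tree_parent n j) = tree_cov n i (tree_parent n j)"
        using less tree_parent_less tree_depth_parent by auto
      then show ?thesis
        using rec[OF \<open>1 \<le> i\<close> \<open>1 \<le> j\<close> less.prems] tree_cov_rec[OF \<open>1 \<le> i\<close> \<open>1 \<le> j\<close>, of n]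
        by linarith
    qed
  qed
  then show ?thesis using Z(1) by (intro eq_matI) auto
qed

lemma r_closed_form: "r n m = 2 * real n + 2 * real m - 2 * hit_time n m"
proof -
  have "eff_res (tree_adj n m) n (n + m) = 2 * (W $$ (n, n) + W $$ (n + m, n + m) - 2 * W $$ (n, n + m))"
  proof (rule eff_res_grounded)
    show "\<And>j. j < N \<Longrightarrow> tree_adj n m $$ (0, j) = 0" by (simp add: tree_adj_entry)
    show "\<And>Z. grounded_lyap_sol L Z \<longleftrightarrow> Z = W"
      using tree_cov_solves grounded_lyap_sol_unique by blast
  qed simp_all
  then show ?thesis
    using m_pos by (simp add: r_def tree_cov_def depth_cov_def tree_depth_def)
qed

end

lemma sum_r_right:
  "(\<Sum>k=1..b. r a k) = 2 * real a * real b + real b * (real b + 1) - 2 * (\<Sum>k=1..b. hit_time a k)"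
proof -
  have "(\<Sum>k=1..b. r a k) = (\<Sum>k=1..b. 2 * real a + 2 * real k - 2 * hit_time a k)"
    by (rule sum.cong) (simp_all add: r_closed_form)
  also have "\<dots> = 2 * real a * real b + 2 * (\<Sum>k=1..b. real k) - 2 * (\<Sum>k=1..b. hit_time a k)"
    by (simp add: sum.distrib sum_subtractf sum_distrib_left)
  finally show ?thesis unfolding sum_of_nat_Icc_1 by simp
qed

lemma sum_r_left:
  assumes "1 \<le> b"
  shows "(\<Sum>k=1..a. r k b) = real a * (real a + 1) - 2 * real a * real b + 2 * (\<Sum>k=1..b. hit_time a k)"
proof -
  have "(\<Sum>k=1..a. r k b) = (\<Sum>k=1..a. 2 * real k + 2 * real b - 2 * hit_time k b)"
    by (rule sum.cong) (simp_all add: r_closed_form[OF assms])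
  also have "\<dots> = 2 * (\<Sum>k=1..a. real k) + 2 * real a * real b - 2 * (\<Sum>k=1..a. hit_time k b)"
    by (simp add: sum.distrib sum_subtractf sum_distrib_left)
  finally show ?thesis
    using sum_hit_time_row_col[of a b] unfolding sum_of_nat_Icc_1 by simp
qed

lemma sum_pow2_r_right:
  "(\<Sum>k=1..b. 2^k * r a k) = 2^(b+2) * (real a + real b + 1 - hit_time (Suc a) b) - 4 * real a - 4"
proof -
  have "(\<Sum>k=1..b. 2^k * r a k)
      = (\<Sum>k=1..b. 2 * real a * 2^k + 2 * (real k * 2^k) - 2 * (2^k * hit_time a k))"
    by (rule sum.cong) (simp_all add: r_closed_form algebra_simps)
  also have "\<dots> = 2 * real a * (\<Sum>k=1..b. 2^k) + 2 * (\<Sum>k=1..b. real k * 2^k)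
      - 2 * (\<Sum>k=1..b. 2^k * hit_time a k)"
    by (simp add: sum.distrib sum_subtractf sum_distrib_left)
  finally show ?thesis
    unfolding sum_pow2 sum_of_nat_mult_pow2 sum_pow2_hit_time by (simp add: algebra_simps)
qed

lemma sum_pow2_r_left:
  assumes "1 \<le> b"
  shows "(\<Sum>k=1..a. 2^k * r k b) = 2^(a+2) * (real a + real b + 1 - hit_time a (Suc b)) - 4 * real b - 4"
proof -
  have "(\<Sum>k=1..a. 2^k * r k b) = (\<Sum>k=1..a. 2^k * r b k)"
    by (rule sum.cong) (simp_all add: r_closed_form[OF assms] r_closed_form hit_time_sym)
  then show ?thesis unfolding sum_pow2_r_right by (simp add: hit_time_sym[of a] algebra_simps)
qed

lemma double_sum_pow2_r_left:
  "(\<Sum>k=1..a. \<Sum>j=1..b. 2^k * r k j) =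
     2^(a+2) * (real b * (real a + 1) + real b * (real b + 1) / 2 + 2
       - (\<Sum>j=1..b. hit_time a j) - hit_time a (Suc b)) - 2 * real b * (real b + 3) - 8"
proof -
  have "(\<Sum>k=1..a. \<Sum>j=1..b. 2^k * r k j) = (\<Sum>j=1..b. \<Sum>k=1..a. 2^k * r k j)"
    by (rule sum.swap)
  also have "\<dots> = (\<Sum>j=1..b. 2^(a+2) * (real a + real j + 1 - hit_time a (Suc j)) - 4 * real j - 4)"
    by (intro sum.cong refl sum_pow2_r_left) simp
  also have "\<dots> = 2^(a+2) * (real b * (real a + 1) + (\<Sum>j=1..b. real j) - (\<Sum>j=1..b. hit_time a (Suc j)))
      - 4 * (\<Sum>j=1..b. real j) - 4 * real b"
    by (simp add: sum.distrib sum_subtractf sum_distrib_left algebra_simps)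
  finally show ?thesis
    unfolding sum_Icc_1_Suc sum_of_nat_Icc_1 hit_time_sym[of a 1] hit_time_1_left
    by (simp add: algebra_simps power_add) (simp add: field_simps)
qed

lemma double_sum_pow2_r_right:
  "(\<Sum>k=1..a. \<Sum>j=1..b. 2^j * r k j) =
     2^(b+2) * (real a * (real b + 1) + real a * (real a + 1) / 2 + 2 - 2 * real a * real b
       + (\<Sum>j=1..b. hit_time a j) - hit_time (Suc a) b) - 2 * real a * (real a + 3) - 8"
proof -
  have col: "(\<Sum>k=1..a. hit_time k b) = 2 * real a * real b - (\<Sum>j=1..b. hit_time a j)"
    using sum_hit_time_row_col[of a b] by simp
  have "(\<Sum>k=1..a. \<Sum>j=1..b. 2^j * r k j)
      = (\<Sum>k=1..a. 2^(b+2) * (real k + real b + 1 - hit_time (Suc k) b) - 4 * real k - 4)"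
    by (intro sum.cong refl sum_pow2_r_right)
  also have "\<dots> = 2^(b+2) * (real a * (real b + 1) + (\<Sum>k=1..a. real k) - (\<Sum>k=1..a. hit_time (Suc k) b))
      - 4 * (\<Sum>k=1..a. real k) - 4 * real a"
    by (simp add: sum.distrib sum_subtractf sum_distrib_left algebra_simps)
  finally show ?thesis
    unfolding sum_Icc_1_Suc[of "\<lambda>k. hit_time k b"] col sum_of_nat_Icc_1 hit_time_1_left
    by (simp add: algebra_simps power_add) (simp add: field_simps)
qed

lemma powr_two_diff: "(2::real) powr (real k - real m) = 2^k / 2^m"
  by (simp add: powr_diff powr_realpow)

lemma powr_two_1_diff: "(2::real) powr (1 + real k - real m) = 2 * 2^k / 2^m"
  by (simp add: powr_diff powr_add powr_realpow)

lemma powr_two_minus: "(2::real) powr (- real k) = 1 / 2^k"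
  by (simp add: powr_minus_divide powr_realpow)

theorem lemma7:
  fixes n l :: nat
  assumes "n \<ge> 1" and "l \<ge> 1"
  shows "r n (l + 1) =
      (- 3 * real n ^ 2 + 3 * real l ^ 2 - 2 * real n * real l - real n + 5 * real l + 2)
        / (2 * (real n + real l + 1) ^ 2)
    + (real l ^ 2 + 2 * real n * real l + 2 * real n + 3 * real l) / (real n + real l + 1)
        * 2 powr (- real n)
    + (real n ^ 2 + real n + 2) / (2 * (real n + real l + 1)) * 2 powr (- real l)
    + 1 / (4 * (real n + real l + 1)) *
        (\<Sum>k = 1..l. (4 - 2 / (real n + real l + 1) - 2 powr (real k - real l)) * r n k)
    - (real n + real l + 2) / (2 * (real n + real l + 1)) *
        (\<Sum>k = 1..n. (1 / (real n + real l + 1) - 2 powr (real k - real n)) * r k l)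
    - 1 / (4 * (real n + real l + 1)) *
        (\<Sum>k = 1..n. \<Sum>j = 1..l. (2 powr (1 + real k - real n) - 2 powr (real j - real l)) * r k j)"
proof -
  define s where "s = real n + real l + 1"
  have "s \<noteq> 0" and l_eq: "real l = s - real n - 1"
    by (simp_all add: s_def)
  have r_lhs: "r n (l + 1) = 2 * real n + 2 * real l + 2 - 2 * hit_time n (Suc l)"
    by (simp add: r_closed_form)
  have row: "(\<Sum>k = 1..l. (4 - 2 / s - 2 powr (real k - real l)) * r n k)
      = (4 - 2 / s) * (\<Sum>k=1..l. r n k) - (\<Sum>k=1..l. 2^k * r n k) / 2^l"
    by (simp add: powr_two_diff left_diff_distrib sum_subtractf sum_distrib_left sum_divide_distrib)
  have col: "(\<Sum>k = 1..n. (1 / s - 2 powr (real k - real n)) * r k l)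
      = (\<Sum>k=1..n. r k l) / s - (\<Sum>k=1..n. 2^k * r k l) / 2^n"
    by (simp add: powr_two_diff left_diff_distrib sum_subtractf sum_distrib_left sum_divide_distrib)
  have double: "(\<Sum>k = 1..n. \<Sum>j = 1..l. (2 powr (1 + real k - real n) - 2 powr (real j - real l)) * r k j)
      = 2 * (\<Sum>k=1..n. \<Sum>j=1..l. 2^k * r k j) / 2^n - (\<Sum>k=1..n. \<Sum>j=1..l. 2^j * r k j) / 2^l"
    by (simp add: powr_two_diff powr_two_1_diff mult.assoc left_diff_distrib sum_subtractf sum_distrib_left
        sum_divide_distrib)
  \<comment> \<open>Three passes: the double sums must be evaluated before their inner sums, and \<open>real l\<close> is
    eliminated only once the powers of two are closed.\<close>
  show ?thesis
    unfolding s_def[symmetric] row col double double_sum_pow2_r_left double_sum_pow2_r_right powr_two_minus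
    unfolding sum_r_right sum_r_left[OF \<open>l \<ge> 1\<close>] sum_pow2_r_right sum_pow2_r_left[OF \<open>l \<ge> 1\<close>] r_lhs
    unfolding l_eq
    using \<open>s \<noteq> 0\<close> by (simp add: field_simps power_add power2_eq_square) algebra
qed

end
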